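(* Let $F\subseteq P_{3,4}$ be a face. Suppose there exist $f\in J_F$ and $g,c,d\in H_2$ such that $c\notin J_F$, $c-d\in J_F$, and $fg=cd$. Then $F$ is not exposed. In particular, this holds if there exist $f\in J_F$, $g\in H_2$ and $c\in H_2\setminus J_F$ with $fg=c^2$.
   Context: $H_k\subseteq\mathbb R[x,y,z]$: real ternary forms of degree $k$; $P_{3,4}=\{f\in H_4: f\ge0\text{ on }\mathbb P^2(\mathbb R)\}$. A face of $P_{3,4}$ is a convex subcone $F$ such that $a,b\in P_{3,4}$, $a+b\in F$ imply $a,b\in F$; it is exposed if $F=\ker L\cap P_{3,4}$ for a linear functional $L$ on $H_4$ nonnegative on $P_{3,4}$. $J_F=\{q\in H_2: q^2\in F\}$ (a linear subspace). *)

theory Defs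
  imports Main "HOL.Real"
begin

text \<open>Real ternary forms are represented by their polynomial functions on R^3
(faithful since R is infinite). Points are triples (x,y,z).\<close>

type_synonym tform = "real \<times> real \<times> real \<Rightarrow> real"

definition H :: "nat \<Rightarrow> tform set" where
  "H k = {f. \<exists>a :: nat \<Rightarrow> nat \<Rightarrow> real. \<forall>x y z.
      f (x, y, z) = (\<Sum>i\<le>k. \<Sum>j\<le>k - i. a i j * x ^ i * y ^ j * z ^ (k - i - j))}"

definition P34 :: "tform set" where
  "P34 = {f \<in> H 4. \<forall>v. f v \<ge> 0}"

definition is_face :: "tform set \<Rightarrow> bool" where
  "is_face F \<longleftrightarrow> F \<subseteq> P34
     \<and> (\<forall>a\<in>F. \<forall>b\<in>F. (\<lambda>v. a v + b v) \<in> F)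
     \<and> (\<forall>a\<in>F. \<forall>t::real. t \<ge> 0 \<longrightarrow> (\<lambda>v. t * a v) \<in> F)
     \<and> (\<forall>a\<in>P34. \<forall>b\<in>P34. (\<lambda>v. a v + b v) \<in> F \<longrightarrow> a \<in> F \<and> b \<in> F)"

definition linear_on_H4 :: "(tform \<Rightarrow> real) \<Rightarrow> bool" where
  "linear_on_H4 L \<longleftrightarrow>
     (\<forall>a\<in>H 4. \<forall>b\<in>H 4. L (\<lambda>v. a v + b v) = L a + L b)
     \<and> (\<forall>a\<in>H 4. \<forall>t::real. L (\<lambda>v. t * a v) = t * L a)"

definition is_exposed_face :: "tform set \<Rightarrow> bool" where
  "is_exposed_face F \<longleftrightarrow> is_face F \<and>
     (\<exists>L. linear_on_H4 L \<and> (\<forall>p\<in>P34. L p \<ge> 0) \<and> F = {p \<in> P34. L p = 0})"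

definition J :: "tform set \<Rightarrow> tform set" where
  "J F = {q \<in> H 2. (\<lambda>v. (q v)\<^sup>2) \<in> F}"

end

theory Submission
  imports Defs
begin

text \<open>
  Let F be exposed by a functional L that is nonnegative on P34, so that
  F is the zero set of L in P34.  Since every square q^2 of a quadric q is in P34,
  J F consists exactly of the quadrics q with L(q^2) = 0.  The quadratic polynomial
  t \<mapsto> L((t q + h)^2) = t^2 L(q^2) + 2t L(q h) + L(h^2) is nonnegative, so L(q^2) = 0 forces
  L(q h) = 0 for every quadric h (a Cauchy-Schwarz argument).  Now if f, c - d lie in J F
  and f g = c d, then c^2 = (c - d) c + f g, hence L(c^2) = 0 and c \<in> J F.
\<close>

definition mono3 :: "nat \<Rightarrow> nat \<Rightarrow> nat \<Rightarrow> tform" where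
  "mono3 k i j = (\<lambda>(x, y, z). x ^ i * y ^ j * z ^ (k - i - j))"

lemma H_alt: "f \<in> H k \<longleftrightarrow> (\<exists>a. f = (\<lambda>v. \<Sum>i\<le>k. \<Sum>j\<le>k - i. a i j * mono3 k i j v))"
  unfolding H_def mono3_def by (auto simp: fun_eq_iff mult.assoc)

lemma H_zero: "(\<lambda>v. 0) \<in> H k"
  unfolding H_alt by (rule exI[of _ "\<lambda>i j. 0"]) simp

lemma H_add: "f \<in> H k \<Longrightarrow> g \<in> H k \<Longrightarrow> (\<lambda>v. f v + g v) \<in> H k"
  unfolding H_alt
  by (clarify, rename_tac a b, rule_tac x = "\<lambda>i j. a i j + b i j" in exI)
     (simp add: distrib_right sum.distrib)

lemma H_scale: "f \<in> H k \<Longrightarrow> (\<lambda>v. t * f v) \<in> H k"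
  unfolding H_alt
  by (clarify, rename_tac a, rule_tac x = "\<lambda>i j. t * a i j" in exI)
     (simp add: sum_distrib_left mult.assoc)

lemma H_sum: "finite A \<Longrightarrow> (\<And>i. i \<in> A \<Longrightarrow> F i \<in> H k) \<Longrightarrow> (\<lambda>v. \<Sum>i\<in>A. F i v) \<in> H k"
proof (induction A rule: finite_induct)
  case empty
  then show ?case using H_zero by simp
next
  case (insert x A)
  then show ?case using H_add[of "F x" k "\<lambda>v. \<Sum>i\<in>A. F i v"] by simp
qed

lemma H_mono: assumes "i + j \<le> k" shows "mono3 k i j \<in> H k"
  unfolding H_alt
proof (intro exI[of _ "\<lambda>i' j'. if i' = i \<and> j' = j then 1 else 0"] ext)
  fix v
  have delta: "(if P then 1 else 0) * x = (if P then x else (0::real))" for P x by simp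
  have "(\<Sum>i'\<le>k. \<Sum>j'\<le>k - i'. (if i' = i \<and> j' = j then 1 else 0) * mono3 k i' j' v)
      = (\<Sum>i'\<le>k. if i' = i then (\<Sum>j'\<le>k - i'. if j' = j then mono3 k i' j' v else 0) else 0)"
    by (intro sum.cong) (auto simp: delta)
  also have "\<dots> = mono3 k i j v"
    using assms by (subgoal_tac "j \<le> k - i") (simp, arith)
  finally show "mono3 k i j v = (\<Sum>i'\<le>k. \<Sum>j'\<le>k - i'.
      (if i' = i \<and> j' = j then 1 else 0) * mono3 k i' j' v)" by simp
qed

lemma mono3_mult:
  assumes "i + j \<le> m" "i' + j' \<le> n"
  shows "mono3 m i j v * mono3 n i' j' v = mono3 (m + n) (i + i') (j + j') v"
proof -
  obtain x y z where v: "v = (x, y, z)" by (cases v) auto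
  have "m + n - (i + i') - (j + j') = (m - i - j) + (n - i' - j')" using assms by arith
  then show ?thesis unfolding mono3_def v by (simp add: power_add algebra_simps)
qed

lemma H_mult:
  assumes "f \<in> H m" "g \<in> H n"
  shows "(\<lambda>v. f v * g v) \<in> H (m + n)"
proof -
  obtain a where a: "f = (\<lambda>v. \<Sum>i\<le>m. \<Sum>j\<le>m - i. a i j * mono3 m i j v)"
    using assms(1) unfolding H_alt by blast
  obtain b where b: "g = (\<lambda>v. \<Sum>i\<le>n. \<Sum>j\<le>n - i. b i j * mono3 n i j v)"
    using assms(2) unfolding H_alt by blast
  have "(\<lambda>v. f v * g v) = (\<lambda>v. \<Sum>i\<le>m. \<Sum>j\<le>m - i. \<Sum>i'\<le>n. \<Sum>j'\<le>n - i'.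
      (a i j * b i' j') * mono3 (m + n) (i + i') (j + j') v)"
  proof (rule ext)
    fix v
    have "f v * g v = (\<Sum>i\<le>m. \<Sum>j\<le>m - i. \<Sum>i'\<le>n. \<Sum>j'\<le>n - i'.
        (a i j * mono3 m i j v) * (b i' j' * mono3 n i' j' v))"
      unfolding a b sum_distrib_right unfolding sum_distrib_left ..
    then show "f v * g v = (\<Sum>i\<le>m. \<Sum>j\<le>m - i. \<Sum>i'\<le>n. \<Sum>j'\<le>n - i'.
        (a i j * b i' j') * mono3 (m + n) (i + i') (j + j') v)"
      by (simp add: mono3_mult[symmetric] algebra_simps)
  qed
  also have "\<dots> \<in> H (m + n)"
    by (intro H_sum finite_atMost H_scale H_mono) auto
  finally show ?thesis .
qed

lemma H2_mult: "f \<in> H 2 \<Longrightarrow> g \<in> H 2 \<Longrightarrow> (\<lambda>v. f v * g v) \<in> H 4"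
  using H_mult[of f 2 g 2] by simp

lemma square_in_P34: "q \<in> H 2 \<Longrightarrow> (\<lambda>v. q v * q v) \<in> P34"
  unfolding P34_def using H2_mult by auto

lemma linear_on_H4_comb:
  assumes "linear_on_H4 L" "a \<in> H 4" "b \<in> H 4"
  shows "L (\<lambda>v. s * a v + b v) = s * L a + L b"
  using assms H_scale[OF assms(2)] unfolding linear_on_H4_def by simp

lemma affine_nonneg_slope_zero:
  fixes a b :: real
  assumes "\<And>t. 0 \<le> a * t + b"
  shows "a = 0"
proof (rule ccontr)
  assume "a \<noteq> 0"
  then have "a * (- (b + 1) / a) + b = -1" by (simp add: field_simps)
  with assms[of "- (b + 1) / a"] show False by linarith
qed

text \<open>Cauchy-Schwarz: if L \<ge> 0 on P34 annihilates q^2, it annihilates every product q h.\<close>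
lemma annihilated_square_annihilates_products:
  assumes lin: "linear_on_H4 L" and pos: "\<forall>p\<in>P34. L p \<ge> 0"
    and q: "q \<in> H 2" and h: "h \<in> H 2" and zero: "L (\<lambda>v. q v * q v) = 0"
  shows "L (\<lambda>v. q v * h v) = 0"
proof -
  have "0 \<le> (2 * L (\<lambda>v. q v * h v)) * t + L (\<lambda>v. h v * h v)" for t
  proof -
    have qt: "(\<lambda>v. t * q v + h v) \<in> H 2" using H_add H_scale q h by blast
    have expand: "(\<lambda>v. (t * q v + h v) * (t * q v + h v))
        = (\<lambda>v. (t * t) * (q v * q v) + ((2 * t) * (q v * h v) + h v * h v))"
      by (simp add: algebra_simps)
    have "L (\<lambda>v. (t * t) * (q v * q v) + ((2 * t) * (q v * h v) + h v * h v))
        = (t * t) * L (\<lambda>v. q v * q v) + L (\<lambda>v. (2 * t) * (q v * h v) + h v * h v)"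
      using q h H2_mult H_add H_scale by (intro linear_on_H4_comb[OF lin]) auto
    also have "L (\<lambda>v. (2 * t) * (q v * h v) + h v * h v)
        = (2 * t) * L (\<lambda>v. q v * h v) + L (\<lambda>v. h v * h v)"
      using q h H2_mult by (intro linear_on_H4_comb[OF lin]) auto
    finally have "L (\<lambda>v. (t * q v + h v) * (t * q v + h v))
        = (2 * L (\<lambda>v. q v * h v)) * t + L (\<lambda>v. h v * h v)"
      unfolding expand zero by simp
    moreover have "L (\<lambda>v. (t * q v + h v) * (t * q v + h v)) \<ge> 0"
      using pos square_in_P34[OF qt] by blast
    ultimately show ?thesis by simp
  qed
  then show ?thesis using affine_nonneg_slope_zero by fastforce
qed

lemma exposed_J_iff:
  assumes "F = {p \<in> P34. L p = 0}"
  shows "q \<in> J F \<longleftrightarrow> q \<in> H 2 \<and> L (\<lambda>v. q v * q v) = 0"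
  using assms square_in_P34 unfolding J_def by (auto simp: power2_eq_square)

text \<open>The key property: c^2 = (c - d) c + f g is annihilated by L, so c \<in> J F.\<close>
lemma exposed_J_closed:
  assumes "is_exposed_face F"
    and f: "f \<in> J F" and g: "g \<in> H 2" and c: "c \<in> H 2" and d: "d \<in> H 2"
    and cd: "(\<lambda>v. c v - d v) \<in> J F" and fg: "\<forall>v. f v * g v = c v * d v"
  shows "c \<in> J F"
proof -
  obtain L where lin: "linear_on_H4 L" and pos: "\<forall>p\<in>P34. L p \<ge> 0"
    and F: "F = {p \<in> P34. L p = 0}"
    using assms(1) unfolding is_exposed_face_def by blast
  let ?e = "\<lambda>v. c v - d v"
  have "L (\<lambda>v. f v * g v) = 0"
    using f g exposed_J_iff[OF F] annihilated_square_annihilates_products[OF lin pos] by blast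
  moreover have "(\<lambda>v. f v * g v) = (\<lambda>v. c v * d v)" using fg by blast
  ultimately have cd0: "L (\<lambda>v. c v * d v) = 0" by simp
  have e: "?e \<in> H 2" using cd exposed_J_iff[OF F] by blast
  have ec0: "L (\<lambda>v. ?e v * c v) = 0"
    using cd c exposed_J_iff[OF F] annihilated_square_annihilates_products[OF lin pos] by blast
  have decompose: "(\<lambda>v. c v * c v) = (\<lambda>v. 1 * (?e v * c v) + c v * d v)"
    by (simp add: algebra_simps)
  have "L (\<lambda>v. 1 * (?e v * c v) + c v * d v) = 1 * L (\<lambda>v. ?e v * c v) + L (\<lambda>v. c v * d v)"
    using e c d H2_mult by (intro linear_on_H4_comb[OF lin]) auto
  then have "L (\<lambda>v. c v * c v) = 0" unfolding decompose ec0 cd0 by simp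
  then show ?thesis using c exposed_J_iff[OF F] by blast
qed

lemma zero_in_J:
  assumes "is_face F" "f \<in> J F"
  shows "(\<lambda>v. 0) \<in> J F"
proof -
  have "(\<lambda>v. 0 * (f v)\<^sup>2) \<in> F" using assms unfolding is_face_def J_def by blast
  then show ?thesis using H_zero unfolding J_def by simp
qed

theorem mainTheorem17:
  assumes "is_face F"
  shows "(\<forall>f g c d. f \<in> J F \<and> g \<in> H 2 \<and> c \<in> H 2 \<and> d \<in> H 2
            \<and> c \<notin> J F \<and> (\<lambda>v. c v - d v) \<in> J F
            \<and> (\<forall>v. f v * g v = c v * d v)
          \<longrightarrow> \<not> is_exposed_face F)
       \<and> (\<forall>f g c. f \<in> J F \<and> g \<in> H 2 \<and> c \<in> H 2 \<and> c \<notin> J F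
            \<and> (\<forall>v. f v * g v = (c v)\<^sup>2)
          \<longrightarrow> \<not> is_exposed_face F)"
proof (intro conjI allI impI)
  fix f g c d
  assume "f \<in> J F \<and> g \<in> H 2 \<and> c \<in> H 2 \<and> d \<in> H 2 \<and> c \<notin> J F
      \<and> (\<lambda>v. c v - d v) \<in> J F \<and> (\<forall>v. f v * g v = c v * d v)"
  then show "\<not> is_exposed_face F" using exposed_J_closed by blast
next
  fix f g c
  assume hyps: "f \<in> J F \<and> g \<in> H 2 \<and> c \<in> H 2 \<and> c \<notin> J F \<and> (\<forall>v. f v * g v = (c v)\<^sup>2)"
  have "(\<lambda>v. c v - c v) \<in> J F" using zero_in_J[OF assms, of f] hyps by simp
  moreover have "\<forall>v. f v * g v = c v * c v" using hyps by (simp add: power2_eq_square)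
  ultimately show "\<not> is_exposed_face F" using hyps exposed_J_closed[of F f g c c] by blast
qed

end
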